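(* Let $m\ge 2$, $\boldsymbol{\mu}\in\mathbb{R}^m$, and let $\boldsymbol{\Sigma}\in\mathbb{R}^{m\times m}$ be symmetric positive definite with symmetric positive definite square root $\boldsymbol{\Sigma}^{1/2}$. Let $\mathcal{R}$ be a non-negative scalar random variable with probability density $p_{\mathcal{R}}$ on $(0,\infty)$, and let $\boldsymbol{\mathcal{V}}\sim vMF(\boldsymbol{\mu}_v,\tau)$ be independent of $\mathcal{R}$, with density $p_{\boldsymbol{\mathcal{V}}}$. Define $\boldsymbol{\mathcal{X}}=\boldsymbol{\mu}+\mathcal{R}\,\boldsymbol{\Sigma}^{1/2}\boldsymbol{\mathcal{V}}$. Then $\boldsymbol{\mathcal{X}}$ has a probability density (with respect to Lebesgue measure on $\mathbb{R}^m$) given, for $\mathbf{x}\neq\boldsymbol{\mu}$, by $$p_{\boldsymbol{\mathcal{X}}}(\mathbf{x})=\det(\boldsymbol{\Sigma})^{-1/2}\cdot p_{\boldsymbol{\mathcal{V}}}\!\Big(\frac{\boldsymbol{\Sigma}^{-1/2}(\mathbf{x}-\boldsymbol{\mu})}{\sqrt{t}}\Big)\cdot g(t),$$ where $t=(\mathbf{x}-\boldsymbol{\mu})^T\boldsymbol{\Sigma}^{-1}(\mathbf{x}-\boldsymbol{\mu})$ and $g(t)=t^{-\frac{m-1}{2}}\,p_{\mathcal{R}}(\sqrt{t})$.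
   Context: The von Mises–Fisher distribution $vMF(\boldsymbol{\mu}_v,\tau)$ on the unit sphere $\mathbb{S}^{m-1}=\{\mathbf{x}\in\mathbb{R}^m:\mathbf{x}^T\mathbf{x}=1\}$, with mean direction $\boldsymbol{\mu}_v\in\mathbb{S}^{m-1}$ and concentration $\tau>0$, has density with respect to the surface measure on $\mathbb{S}^{m-1}$ given by $p_{\boldsymbol{\mathcal{V}}}(\mathbf{v})=C_m(\tau)\exp(\tau\boldsymbol{\mu}_v^T\mathbf{v})$, where $C_m(\tau)=\tau^{m/2-1}/\big((2\pi)^{m/2}I_{m/2-1}(\tau)\big)$ and $I_a$ is the modified Bessel function of the first kind. The random vector $\boldsymbol{\mathcal{X}}$ is called a vMF elliptical distribution. *)

theory Defs
  imports "HOL-Probability.Probability"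
begin

definition bessel_I :: "real \<Rightarrow> real \<Rightarrow> real" where
  "bessel_I a x = (\<Sum>k. (x / 2) powr (2 * real k + a) / (fact k * Gamma (real k + a + 1)))"

text \<open>Surface (Hausdorff) measure on the unit sphere of real^'m, defined as the
  cone measure: sigma(A) = m * Lebesgue volume of {r v | 0 < r <= 1, v in A on the sphere}.\<close>
definition sphere_surface :: "(real ^ 'm) measure" where
  "sphere_surface = measure_of UNIV (sets borel)
     (\<lambda>A. of_nat CARD('m) * emeasure lborel
        {r *\<^sub>R v | r v. 0 < r \<and> r \<le> 1 \<and> v \<in> A \<and> v \<in> sphere 0 1})"

definition vMF_const :: "nat \<Rightarrow> real \<Rightarrow> real" where
  "vMF_const m \<tau> = \<tau> powr (real m / 2 - 1) /
     ((2 * pi) powr (real m / 2) * bessel_I (real m / 2 - 1) \<tau>)"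

definition vMF_density :: "real ^ 'm \<Rightarrow> real \<Rightarrow> real ^ 'm \<Rightarrow> real" where
  "vMF_density \<mu>v \<tau> v =
     (if v \<in> sphere 0 1 then vMF_const CARD('m) \<tau> * exp (\<tau> * (\<mu>v \<bullet> v)) else 0)"

definition sym_pos_def :: "real ^ 'm ^ 'm \<Rightarrow> bool" where
  "sym_pos_def A \<longleftrightarrow> transpose A = A \<and> (\<forall>x. x \<noteq> 0 \<longrightarrow> x \<bullet> (A *v x) > 0)"

end

theory Submission
  imports Defs
begin

(*
  Write X = mu + S Y with Y = R V.  In polar coordinates, Lebesgue measure on
  R^m is the image of r^(m-1) dr (x) sigma under (r, v) |-> r v, where sigma is
  the surface measure sphere_surface (a cone measure, so this reduces to
  computing volumes of sectors); hence independence of R and V gives Y the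
  density |y|^(1-m) p_R(|y|) p_V(y/|y|).  The affine map y |-> mu + S y scales
  Lebesgue measure by |det S| = det Sigma^(1/2), and y = S^-1 (x - mu) satisfies
  |y|^2 = (x - mu)^T Sigma^-1 (x - mu) = t.
*)

section \<open>Lebesgue measure of linear images\<close>

lemma det_matrix_shear:
  fixes m n :: "'n::finite"
  assumes "m \<noteq> n"
  shows "det (matrix (\<lambda>x::real^'n. \<chi> i. if i = m then x $ m + x $ n else x $ i)) = 1"
proof -
  have "matrix (\<lambda>x::real^'n. \<chi> i. if i = m then x $ m + x $ n else x $ i)
      = (\<chi> k. if k = m then row m (mat 1) + 1 *s row n (mat 1) else row k (mat 1 :: real^'n^'n))"
    by (auto simp: matrix_def vec_eq_iff row_def mat_def axis_def)
  then show ?thesis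
    using det_row_operation[OF assms, of "mat 1" 1] by (simp add: det_I)
qed

lemma measure_shear_cbox:
  fixes a b :: "real^'n"
  assumes "m \<noteq> n"
  shows "measure lebesgue ((\<lambda>x. \<chi> i. if i = m then x $ m + x $ n else x $ i) ` cbox a b)
       = measure lebesgue (cbox a b)"
proof (cases "cbox a b = {}")
  case False
  let ?h = "\<lambda>x::real^'n. \<chi> i. if i = m then x $ m + x $ n else x $ i"
  define c :: "real^'n" where "c = axis n (a $ n)"
  have h_add: "?h (c + x) = ?h c + ?h x" for x
    by (simp add: vec_eq_iff)
  have shift: "cbox a b = (+) c ` cbox (a - c) (b - c)"
    using cbox_translation[of c "a - c" "b - c"] by simp
  \<comment> \<open>after the shift the lower corner has n-th coordinate 0, as \<open>measure_shear_interval\<close> requires\<close>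
  have "measure lebesgue (?h ` cbox a b) = measure lebesgue ((+) (?h c) ` ?h ` cbox (a - c) (b - c))"
    unfolding shift image_comp by (simp add: o_def h_add)
  also have "\<dots> = measure lebesgue (?h ` cbox (a - c) (b - c))"
    by (rule measure_translation)
  also have "\<dots> = measure lebesgue (cbox (a - c) (b - c))"
    using False assms by (intro measure_shear_interval) (auto simp: shift c_def)
  also have "\<dots> = measure lebesgue (cbox a b)"
    unfolding shift by (rule measure_translation[symmetric])
  finally show ?thesis .
qed simp

lemma
  fixes p :: "'n::finite \<Rightarrow> 'n"
  assumes p: "p permutes UNIV"
  shows abs_det_matrix_permute_coordinates: "\<bar>det (matrix (\<lambda>x::real^'n. \<chi> i. x $ p i))\<bar> = 1"
    and measure_permute_coordinates_cbox:
      "measure lebesgue ((\<lambda>x::real^'n. \<chi> i. x $ p i) ` cbox a b) = measure lebesgue (cbox a b)"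
proof -
  have "matrix (\<lambda>x::real^'n. \<chi> i. x $ p i) = (\<chi> i. mat 1 $ p i)"
    by (auto simp: matrix_def vec_eq_iff mat_def axis_def)
  then show "\<bar>det (matrix (\<lambda>x::real^'n. \<chi> i. x $ p i))\<bar> = 1"
    using det_permute_rows[OF p, of "mat 1 :: real^'n^'n"] by (simp add: det_I sign_def)
  have img: "(\<lambda>x::real^'n. \<chi> i. x $ p i) ` cbox a b = cbox (\<chi> i. a $ p i) (\<chi> i. b $ p i)"
  proof safe
    fix y :: "real^'n" assume "y \<in> cbox (\<chi> i. a $ p i) (\<chi> i. b $ p i)"
    then have "\<forall>j. a $ j \<le> y $ inv p j \<and> y $ inv p j \<le> b $ j"
      by (metis mem_box_cart(2) permutes_inverses(1)[OF p] vec_lambda_beta)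
    then show "y \<in> (\<lambda>x. \<chi> i. x $ p i) ` cbox a b"
      by (intro image_eqI[of _ _ "\<chi> j. y $ inv p j"])
        (simp_all add: vec_eq_iff mem_box_cart permutes_inverses(2)[OF p])
  qed (auto simp: mem_box_cart)
  have "prod (\<lambda>i. (\<chi> i. b $ p i) $ i - (\<chi> i. a $ p i) $ i) UNIV = prod (\<lambda>i. b $ i - a $ i) UNIV"
    using prod.reindex[OF permutes_inj[OF p], of "\<lambda>i. b $ i - a $ i"] permutes_image[OF p]
    by (simp add: o_def)
  moreover have "cbox (\<chi> i. a $ p i) (\<chi> i. b $ p i) = {} \<longleftrightarrow> cbox a b = {}"
    using img by auto
  ultimately show "measure lebesgue ((\<lambda>x::real^'n. \<chi> i. x $ p i) ` cbox a b) = measure lebesgue (cbox a b)"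
    unfolding img by (simp add: content_cbox_if_cart)
qed

(* The library's measure_linear_image assumes a well-ordered index type; the
   induction over elementary matrices works for any finite one once shears and
   coordinate permutations are handled as above. *)
proposition
  fixes f :: "real^'n \<Rightarrow> real^'n"
  assumes "linear f" and "S \<in> lmeasurable"
  shows measurable_linear_image_cart: "f ` S \<in> lmeasurable"
    and measure_linear_image_cart: "measure lebesgue (f ` S) = \<bar>det (matrix f)\<bar> * measure lebesgue S"
proof -
  define P where "P f \<longleftrightarrow> (\<forall>S \<in> lmeasurable. f ` S \<in> lmeasurable \<and>
      measure lebesgue (f ` S) = \<bar>det (matrix f)\<bar> * measure lebesgue S)" for f :: "real^'n \<Rightarrow> real^'n"
  have P_if_cbox: "P g" if "linear g"
    and "\<And>a b. measure lebesgue (g ` cbox a b) = \<bar>det (matrix g)\<bar> * measure lebesgue (cbox a b)" for g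
    using measure_linear_sufficient[OF that(1) _ that(2)] by (simp add: P_def)
  have "P f"
  proof (rule induct_linear_elementary[OF \<open>linear f\<close>])
    fix g h :: "real^'n \<Rightarrow> real^'n"
    assume "linear g" "linear h" "P g" "P h"
    then show "P (g \<circ> h)"
      unfolding P_def image_comp[symmetric] matrix_compose[OF \<open>linear h\<close> \<open>linear g\<close>]
      by (simp add: det_mul abs_mult)
  next
    fix g :: "real^'n \<Rightarrow> real^'n" and i
    assume "linear g" and "\<And>x. g x $ i = 0"
    then have "\<not> inj g"
      by (metis linear_injective_imp_surjective one_neq_zero surjE vec_component)
    then have "det (matrix g) = 0" and "negligible (g ` S)" for S
      using det_nz_iff_inj[OF \<open>linear g\<close>] negligible_linear_singular_image[OF \<open>linear g\<close>]
      by simp_all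
    then show "P g"
      by (simp add: P_def negligible_imp_measurable negligible_imp_measure0)
  next
    fix c :: "'n \<Rightarrow> real"
    show "P (\<lambda>x. \<chi> i. c i * x $ i)"
      unfolding P_def
      by (simp add: measurable_stretch measure_stretch axis_def matrix_def det_diagonal)
  next
    fix m n :: 'n
    assume "m \<noteq> n"
    have swap: "Transposition.transpose m n permutes UNIV"
      by (rule permutes_swap_id) simp_all
    show "P (\<lambda>x. \<chi> i. x $ Transposition.transpose m n i)"
    proof (rule P_if_cbox)
      show "linear (\<lambda>x::real^'n. \<chi> i. x $ Transposition.transpose m n i)"
        by (rule linearI) (simp_all add: vec_eq_iff)
    qed (simp add: abs_det_matrix_permute_coordinates[OF swap] measure_permute_coordinates_cbox[OF swap])
  next
    fix m n :: 'n
    assume "m \<noteq> n"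
    show "P (\<lambda>x. \<chi> i. if i = m then x $ m + x $ n else x $ i)"
    proof (rule P_if_cbox)
      show "linear (\<lambda>x::real^'n. \<chi> i. if i = m then x $ m + x $ n else x $ i)"
        by (rule linearI) (simp_all add: vec_eq_iff distrib_left)
    qed (simp add: det_matrix_shear measure_shear_cbox \<open>m \<noteq> n\<close>)
  qed
  with \<open>S \<in> lmeasurable\<close> show "f ` S \<in> lmeasurable"
    and "measure lebesgue (f ` S) = \<bar>det (matrix f)\<bar> * measure lebesgue S"
    by (simp_all add: P_def)
qed

section \<open>Matrix inverses and affine changes of variables\<close>

lemma
  fixes A :: "'a::semiring_1^'n^'m"
  assumes "invertible A"
  shows matrix_inv_right: "A ** matrix_inv A = mat 1"
    and matrix_inv_left: "matrix_inv A ** A = mat 1"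
  using someI_ex[OF assms[unfolded invertible_def]] by (simp_all add: matrix_inv_def)

lemma matrix_inv_unique:
  fixes A :: "'a::semiring_1^'n^'m" and B :: "'a^'m^'n"
  assumes "A ** B = mat 1" and "B ** A = mat 1"
  shows "matrix_inv A = B"
proof -
  have "invertible A"
    using assms by (auto simp: invertible_def)
  have "matrix_inv A = matrix_inv A ** (A ** B)"
    by (simp add: assms(1))
  also have "\<dots> = (matrix_inv A ** A) ** B"
    by (simp add: matrix_mul_assoc)
  finally show ?thesis
    using matrix_inv_left[OF \<open>invertible A\<close>] by simp
qed

lemma matrix_inv_matrix_vector_mult [simp]:
  fixes A :: "'a::semiring_1^'n^'m"
  assumes "invertible A"
  shows "matrix_inv A *v (A *v x) = x" and "A *v (matrix_inv A *v y) = y"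
  by (simp_all add: matrix_vector_mul_assoc matrix_inv_left matrix_inv_right assms)

lemma sym_pos_def_invertible:
  fixes S :: "real^'n^'n"
  assumes "sym_pos_def S"
  shows "invertible S"
proof -
  have "inj ((*v) S)"
  proof (rule injI)
    fix x y
    assume "S *v x = S *v y"
    then have "(x - y) \<bullet> (S *v (x - y)) = 0"
      by (simp add: matrix_vector_mult_diff_distrib)
    then show "x = y"
      using assms by (auto simp: sym_pos_def_def dest: spec[of _ "x - y"])
  qed
  then have "det (matrix ((*v) S)) \<noteq> 0"
    using det_nz_iff_inj[OF matrix_vector_mul_linear] by blast
  then show ?thesis
    by (simp add: invertible_det_nz)
qed

lemma matrix_inv_transpose:
  fixes A :: "'a::comm_semiring_1^'n^'n"
  assumes "invertible A"
  shows "matrix_inv (transpose A) = transpose (matrix_inv A)"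
  using assms
  by (intro matrix_inv_unique)
     (simp_all add: matrix_transpose_mul[symmetric] matrix_inv_left matrix_inv_right transpose_mat)

lemma matrix_inv_mult:
  fixes A B :: "'a::semiring_1^'n^'n"
  assumes "invertible A" and "invertible B"
  shows "matrix_inv (A ** B) = matrix_inv B ** matrix_inv A"
proof (rule matrix_inv_unique)
  show "A ** B ** (matrix_inv B ** matrix_inv A) = mat 1"
    using assms by (metis matrix_mul_assoc matrix_mul_lid matrix_inv_right)
  show "matrix_inv B ** matrix_inv A ** (A ** B) = mat 1"
    using assms by (metis matrix_mul_assoc matrix_mul_lid matrix_inv_left)
qed

lemma inner_matrix_inv_square:
  fixes S :: "real^'n^'n"
  assumes "transpose S = S" and "invertible S"
  shows "z \<bullet> (matrix_inv (S ** S) *v z) = (norm (matrix_inv S *v z))\<^sup>2"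
proof -
  have "transpose (matrix_inv S) = matrix_inv S"
    using matrix_inv_transpose[OF assms(2)] assms(1) by simp
  then have "z \<bullet> (matrix_inv S *v (matrix_inv S *v z)) = (matrix_inv S *v z) \<bullet> (matrix_inv S *v z)"
    by (metis dot_lmul_matrix transpose_matrix_vector)
  then show ?thesis
    using assms by (simp add: matrix_inv_mult matrix_vector_mul_assoc[symmetric] power2_norm_eq_inner)
qed

lemma det_square_powr_minus_half:
  fixes S :: "real^'n^'n"
  assumes "invertible S"
  shows "det (S ** S) powr (-1/2) = 1 / \<bar>det S\<bar>"
proof -
  have "det (S ** S) = \<bar>det S\<bar> powr 2"
    using assms by (simp add: det_mul invertible_det_nz power2_eq_square[symmetric])
  then show ?thesis
    using assms by (simp add: powr_powr powr_minus_divide invertible_det_nz)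
qed

lemma lborel_affine_matrix:
  fixes S :: "real^'n^'n" and \<mu> :: "real^'n"
  assumes "invertible S"
  shows "lborel = density (distr lborel borel (\<lambda>y. \<mu> + S *v y)) (\<lambda>_. ennreal \<bar>det S\<bar>)"
proof (rule lborel_eqI)
  let ?T = "\<lambda>y. \<mu> + S *v y" and ?Si = "matrix_inv S"
  have [measurable]: "?T \<in> borel \<rightarrow>\<^sub>M borel"
    by (intro borel_measurable_continuous_onI continuous_intros)
  fix l u :: "real^'n"
  assume "\<And>b. b \<in> Basis \<Longrightarrow> l \<bullet> b \<le> u \<bullet> b"
  then have box: "emeasure lborel (box l u) = (\<Prod>b\<in>Basis. (u - l) \<bullet> b)"
    by (simp add: emeasure_lborel_box_eq inner_diff_left)
  have vimage: "?T -` box l u = (*v) ?Si ` (\<lambda>x. x - \<mu>) ` box l u"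
    using assms by (force simp: image_iff)
  have "(\<lambda>x. x - \<mu>) ` box l u \<in> lmeasurable"
    by (intro measurable_translation_subtract lmeasurable_box)
  then have meq: "measure lebesgue (?T -` box l u) = \<bar>det ?Si\<bar> * measure lebesgue (box l u)"
    and lmeas: "?T -` box l u \<in> lmeasurable"
    unfolding vimage
    by (simp_all add: measure_linear_image_cart measurable_linear_image_cart matrix_of_matrix_vector_mul
        measure_translation_subtract)
  have "emeasure lborel (?T -` box l u) = emeasure lebesgue (?T -` box l u)"
    using measurable_sets[of ?T borel borel "box l u"] by (simp add: emeasure_completion main_part)
  also have "\<dots> = ennreal (\<bar>det ?Si\<bar> * measure lebesgue (box l u))"
    by (simp add: emeasure_eq_measure2[OF lmeas] meq)
  also have "\<dots> = ennreal \<bar>det ?Si\<bar> * emeasure lborel (box l u)"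
    by (simp add: ennreal_mult emeasure_eq_measure2 measure_completion)
  finally have "emeasure lborel (?T -` box l u) = ennreal \<bar>det ?Si\<bar> * emeasure lborel (box l u)" .
  moreover have "\<bar>det S\<bar> * \<bar>det ?Si\<bar> = 1"
    using arg_cong[OF matrix_inv_left[OF assms], of det] by (simp add: det_mul det_I abs_mult[symmetric] mult.commute)
  ultimately show "emeasure (density (distr lborel borel ?T) (\<lambda>_. ennreal \<bar>det S\<bar>)) (box l u)
      = (\<Prod>b\<in>Basis. (u - l) \<bullet> b)"
    by (simp add: emeasure_density emeasure_distr nn_integral_cmult_indicator box
        mult.assoc[symmetric] ennreal_mult[symmetric])
qed simp

lemma distributed_matrix_affine:
  fixes Y :: "'a \<Rightarrow> real^'n" and S :: "real^'n^'n"
  assumes Y: "distributed M lborel Y g" and S: "invertible S"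
  shows "distributed M lborel (\<lambda>\<omega>. \<mu> + S *v Y \<omega>) (\<lambda>x. g (matrix_inv S *v (x - \<mu>)) / ennreal \<bar>det S\<bar>)"
proof -
  let ?T = "\<lambda>y. \<mu> + S *v y" and ?h = "\<lambda>x. g (matrix_inv S *v (x - \<mu>)) / ennreal \<bar>det S\<bar>"
  have T [measurable]: "?T \<in> borel \<rightarrow>\<^sub>M borel"
    by (intro borel_measurable_continuous_onI continuous_intros)
  have [measurable]: "(\<lambda>x. matrix_inv S *v (x - \<mu>)) \<in> borel \<rightarrow>\<^sub>M borel"
    unfolding matrix_vector_mult_diff_distrib by (intro borel_measurable_continuous_onI continuous_intros)
  have [measurable]: "g \<in> borel_measurable borel" and [measurable]: "Y \<in> M \<rightarrow>\<^sub>M borel"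
    using distributed_borel_measurable[OF Y] distributed_measurable[OF Y] by simp_all
  have "0 < \<bar>det S\<bar>"
    using S by (simp add: invertible_det_nz)
  then have cancel: "ennreal \<bar>det S\<bar> * ?h (?T y) = g y" for y
    using S by (simp add: ennreal_times_divide mult.commute[of "ennreal _"] mult_divide_eq_ennreal)
  have "density lborel ?h = density (density (distr lborel borel ?T) (\<lambda>_. ennreal \<bar>det S\<bar>)) ?h"
    using arg_cong[where f="\<lambda>N. density N ?h", OF lborel_affine_matrix[OF S]] .
  also have "\<dots> = density (distr lborel borel ?T) (\<lambda>x. ennreal \<bar>det S\<bar> * ?h x)"
    by (simp add: density_density_eq)
  also have "\<dots> = distr (density lborel (\<lambda>y. ennreal \<bar>det S\<bar> * ?h (?T y))) borel ?T"
    by (simp add: density_distr)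
  also have "\<dots> = distr (distr M lborel Y) borel ?T"
    unfolding cancel distributed_distr_eq_density[OF Y] ..
  also have "\<dots> = distr M lborel (\<lambda>\<omega>. ?T (Y \<omega>))"
    by (subst distr_distr) (auto intro!: distr_cong)
  finally show ?thesis
    unfolding distributed_def by simp
qed

section \<open>Surface measure and polar coordinates\<close>

lemma scaleR_norm_sgn: "norm x *\<^sub>R sgn x = (x :: 'a::real_normed_vector)"
  by (cases "x = 0") (simp_all add: sgn_div_norm)

definition radial_sector :: "(real^'m) set \<Rightarrow> real \<Rightarrow> (real^'m) set" where
  "radial_sector B c = {y. y \<noteq> 0 \<and> norm y \<le> c \<and> sgn y \<in> B}"

lemma radial_sector_borel [measurable]:
  assumes [measurable]: "B \<in> sets borel"
  shows "radial_sector B c \<in> sets borel"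
proof -
  have "Measurable.pred borel (\<lambda>y. y \<noteq> 0 \<and> norm y \<le> c \<and> sgn y \<in> B)"
    by measurable
  then show ?thesis
    by (simp add: radial_sector_def pred_def)
qed

lemma radial_sector_eq_cone:
  "radial_sector A 1 = {r *\<^sub>R v | r v. 0 < r \<and> r \<le> 1 \<and> v \<in> A \<and> v \<in> sphere (0::real^'m) 1}"
proof safe
  fix y :: "real^'m"
  assume "y \<in> radial_sector A 1"
  then show "\<exists>r v. y = r *\<^sub>R v \<and> 0 < r \<and> r \<le> 1 \<and> v \<in> A \<and> v \<in> sphere 0 1"
    by (intro exI[of _ "norm y"] exI[of _ "sgn y"]) (auto simp: radial_sector_def norm_sgn sgn_div_norm)
qed (auto simp: radial_sector_def sgn_scaleR sgn_div_norm)

lemma radial_sector_scaleR: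
  assumes "c > 0"
  shows "(\<lambda>x. c *\<^sub>R x) -` radial_sector B c = radial_sector B 1"
  using assms by (auto simp: radial_sector_def sgn_scaleR)

lemma emeasure_radial_sector:
  fixes B :: "(real^'m) set"
  assumes "B \<in> sets borel" and "c \<ge> 0"
  shows "emeasure lborel (radial_sector B c) = ennreal (c ^ CARD('m)) * emeasure lborel (radial_sector B 1)"
proof (cases "c = 0")
  case False
  with assms have "emeasure lborel (radial_sector B c)
      = emeasure (density (distr lborel borel (\<lambda>x. 0 + c *\<^sub>R x)) (\<lambda>_. ennreal (\<bar>c\<bar> ^ DIM(real^'m)))) (radial_sector B c)"
    using lborel_affine[of c "0::real^'m"] by simp
  with assms False show ?thesis
    by (simp add: emeasure_density emeasure_distr nn_integral_cmult_indicator radial_sector_scaleR)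
next
  case True
  then have "radial_sector B c = {}"
    by (auto simp: radial_sector_def)
  with True show ?thesis
    by simp
qed

lemma sets_sphere_surface [simp, measurable_cong]: "sets (sphere_surface :: (real^'m) measure) = sets borel"
  unfolding sphere_surface_def
  using sets.sigma_sets_eq[of "borel :: (real^'m) measure"] by (simp add: sets_measure_of_conv)

lemma space_sphere_surface [simp]: "space (sphere_surface :: (real^'m) measure) = UNIV"
  unfolding sphere_surface_def by (simp add: space_measure_of_conv)

lemma sets_lborel_pair_sphere_surface [measurable_cong]:
  "sets (lborel \<Otimes>\<^sub>M (sphere_surface :: (real^'m) measure)) = sets (borel \<Otimes>\<^sub>M borel)"
  by (rule sets_pair_measure_cong) simp_all

lemma emeasure_sphere_surface:
  fixes A :: "(real^'m) set"
  assumes "A \<in> sets borel"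
  shows "emeasure sphere_surface A = of_nat CARD('m) * emeasure lborel (radial_sector A 1)"
proof -
  let ?\<sigma> = "\<lambda>A::(real^'m) set. of_nat CARD('m) * emeasure lborel (radial_sector A 1)"
  have "countably_additive (sets borel) ?\<sigma>"
  proof (rule countably_additiveI)
    fix F :: "nat \<Rightarrow> (real^'m) set"
    assume "range F \<subseteq> sets borel" and "disjoint_family F"
    moreover have "radial_sector (\<Union>i. F i) 1 = (\<Union>i. radial_sector (F i) 1)"
      by (auto simp: radial_sector_def)
    moreover have "disjoint_family F \<Longrightarrow> disjoint_family (\<lambda>i. radial_sector (F i) 1)"
      by (auto simp: disjoint_family_on_def radial_sector_def)
    ultimately show "(\<Sum>i. ?\<sigma> (F i)) = ?\<sigma> (\<Union>i. F i)"
      by (simp add: ennreal_suminf_cmult suminf_emeasure image_subset_iff)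
  qed
  then have "emeasure (measure_of UNIV (sets borel) ?\<sigma>) A = ?\<sigma> A"
    using assms sets.sigma_algebra_axioms[of borel]
    by (intro emeasure_measure_of_sigma) (auto simp: positive_def radial_sector_def)
  then show ?thesis
    by (simp add: sphere_surface_def radial_sector_eq_cone)
qed

lemma finite_measure_sphere_surface: "finite_measure (sphere_surface :: (real^'m) measure)"
proof (rule finite_measureI)
  have "emeasure lborel (radial_sector (UNIV :: (real^'m) set) 1) \<le> emeasure lborel (cball (0::real^'m) 1)"
    by (intro emeasure_mono) (auto simp: radial_sector_def)
  also have "\<dots> < \<infinity>"
    by (rule emeasure_lborel_cball_finite)
  finally show "emeasure sphere_surface (space (sphere_surface :: (real^'m) measure)) \<noteq> \<infinity>"
    by (simp add: emeasure_sphere_surface ennreal_mult_eq_top_iff)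
qed

lemma AE_sphere_surface: "AE v in (sphere_surface :: (real^'m) measure). v \<in> sphere 0 1"
proof (rule AE_I')
  have "radial_sector (- sphere (0::real^'m) 1) 1 = {}"
    by (auto simp: radial_sector_def norm_sgn)
  then show "- sphere (0::real^'m) 1 \<in> null_sets sphere_surface"
    by (simp add: null_sets_def emeasure_sphere_surface borel_closed borel_comp)
qed auto

definition radial_density :: "nat \<Rightarrow> real \<Rightarrow> ennreal" where
  "radial_density n r = ennreal (indicator {0<..} r * r ^ (n - 1))"

lemma radial_density_borel [measurable]: "radial_density n \<in> borel_measurable borel"
  unfolding radial_density_def by measurable

lemma radial_density_mult_powr:
  assumes "n \<ge> 1" and "r > 0"
  shows "radial_density n r * ennreal (r powr (1 - real n)) = 1"
proof -
  have "r ^ (n - 1) * r powr (1 - real n) = 1"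
    using assms by (simp add: powr_realpow[symmetric] powr_add[symmetric] of_nat_diff)
  with assms show ?thesis
    by (simp add: radial_density_def ennreal_mult[symmetric])
qed

lemma emeasure_radial_density_atMost:
  assumes "n \<ge> 1"
  shows "emeasure (density lborel (radial_density n)) {..b} = ennreal (max b 0 ^ n / n)"
proof -
  have "emeasure (density lborel (radial_density n)) {..b}
      = (\<integral>\<^sup>+r. ennreal (r ^ (n - 1)) * indicator {0<..max b 0} r \<partial>lborel)"
    by (auto simp: emeasure_density radial_density_def indicator_def intro!: nn_integral_cong)
  also have "\<dots> = (\<integral>\<^sup>+r. ennreal (r ^ (n - 1)) * indicator {0..max b 0} r \<partial>lborel)"
    using AE_lborel_singleton[of 0]
    by (intro nn_integral_cong_AE) (auto elim!: eventually_mono simp: indicator_def)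
  also have "\<dots> = ennreal (max b 0 ^ n / n - 0 ^ n / n)"
    using assms by (intro nn_integral_FTC_Icc) (auto intro!: derivative_eq_intros)
  finally show ?thesis
    using assms by (simp add: power_0_left)
qed

lemma emeasure_norm_atMost_sgn:
  fixes B :: "(real^'m) set"
  assumes [measurable]: "B \<in> sets borel"
  shows "emeasure lborel {y::real^'m. norm y \<le> b \<and> sgn y \<in> B}
       = ennreal (max b 0 ^ CARD('m)) * emeasure lborel (radial_sector B 1)"
proof -
  have [measurable]: "{y::real^'m. norm y \<le> b \<and> sgn y \<in> B} \<in> sets borel"
    by measurable
  have "emeasure lborel {y::real^'m. norm y \<le> b \<and> sgn y \<in> B} = emeasure lborel (radial_sector B (max b 0))"
    using AE_lborel_singleton[of 0]
    by (intro emeasure_eq_AE) (auto elim!: eventually_mono simp: radial_sector_def le_max_iff_disj)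
  also have "\<dots> = ennreal (max b 0 ^ CARD('m)) * emeasure lborel (radial_sector B 1)"
    by (rule emeasure_radial_sector) simp_all
  finally show ?thesis .
qed

lemma emeasure_polar_rectangle:
  fixes A :: "real set" and B :: "(real^'m) set"
  assumes [measurable]: "A \<in> sets borel" "B \<in> sets borel"
  shows "emeasure lborel {y::real^'m. norm y \<in> A \<and> sgn y \<in> B}
       = emeasure (density lborel (radial_density CARD('m))) A * emeasure sphere_surface B"
proof -
  define C where "C = {y::real^'m. sgn y \<in> B}"
  have [measurable]: "C \<in> sets borel"
    unfolding C_def by measurable
  define N where "N = distr (density lborel (indicator C)) borel (norm :: real^'m \<Rightarrow> real)"
  have N: "emeasure N X = emeasure lborel {y::real^'m. norm y \<in> X \<and> sgn y \<in> B}"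
    if [measurable]: "X \<in> sets borel" for X
  proof -
    have "norm -` X \<in> sets (borel :: (real^'m) measure)"
      using measurable_sets[OF borel_measurable_norm that] by simp
    moreover have "{y::real^'m. norm y \<in> X \<and> sgn y \<in> B} = C \<inter> norm -` X"
      by (auto simp: C_def)
    ultimately show ?thesis
      by (simp add: N_def emeasure_distr emeasure_restricted)
  qed
  have "N = density (density lborel (radial_density CARD('m))) (\<lambda>_. emeasure sphere_surface B)"
  proof (rule measure_eqI_generator_eq[where E="range atMost" and A="\<lambda>i. {..real i}" and \<Omega>=UNIV])
    show "Int_stable (range atMost :: real set set)"
      by (auto simp: Int_stable_def)
    show "sets N = sigma_sets UNIV (range atMost)"
      "sets (density (density lborel (radial_density CARD('m))) (\<lambda>_. emeasure sphere_surface B))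
         = sigma_sets UNIV (range atMost)"
      by (simp_all add: N_def borel_eq_atMost)
    fix X :: "real set"
    assume "X \<in> range atMost"
    then obtain b where X: "X = {..b}"
      by auto
    have "ennreal (max b 0 ^ CARD('m)) = of_nat CARD('m) * ennreal (max b 0 ^ CARD('m) / CARD('m))"
      by (simp add: ennreal_of_nat_eq_real_of_nat ennreal_mult'[symmetric])
    then show "emeasure N X
        = emeasure (density (density lborel (radial_density CARD('m))) (\<lambda>_. emeasure sphere_surface B)) X"
      unfolding X N[OF atMost_borel]
      by (simp add: emeasure_density_const emeasure_norm_atMost_sgn emeasure_radial_density_atMost
          emeasure_sphere_surface ac_simps)
  next
    fix i :: nat
    have "emeasure N {..real i} \<le> emeasure lborel (cball (0::real^'m) (real i))"
      unfolding N[OF atMost_borel] by (intro emeasure_mono) auto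
    also have "\<dots> < \<infinity>"
      by (rule emeasure_lborel_cball_finite)
    finally show "emeasure N {..real i} \<noteq> \<infinity>"
      by simp
  qed (auto simp: real_arch_simple)
  then show ?thesis
    using N[OF assms(1)] by (simp add: emeasure_density_const mult.commute)
qed

lemma sigma_finite_measure_radial_density: "sigma_finite_measure (density lborel (radial_density n))"
  by (subst sigma_finite_measure.sigma_finite_iff_density_finite)
     (auto simp: radial_density_def lborel.sigma_finite_measure_axioms)

lemma polar_coordinates:
  "distr lborel (borel \<Otimes>\<^sub>M sphere_surface) (\<lambda>y::real^'m. (norm y, sgn y))
   = density lborel (radial_density CARD('m)) \<Otimes>\<^sub>M sphere_surface"
proof (rule pair_measure_eqI[symmetric])
  show "sigma_finite_measure (density lborel (radial_density CARD('m)))"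
    by (rule sigma_finite_measure_radial_density)
  show "sigma_finite_measure (sphere_surface :: (real^'m) measure)"
    by (rule finite_measure.sigma_finite_measure[OF finite_measure_sphere_surface])
  fix A B
  assume "A \<in> sets (density lborel (radial_density CARD('m)))" "B \<in> sets (sphere_surface :: (real^'m) measure)"
  then have [measurable]: "A \<in> sets borel" "B \<in> sets borel"
    by simp_all
  have "(\<lambda>y::real^'m. (norm y, sgn y)) -` (A \<times> B) \<inter> space lborel = {y. norm y \<in> A \<and> sgn y \<in> B}"
    by auto
  then show "emeasure (density lborel (radial_density CARD('m))) A * emeasure sphere_surface B
      = emeasure (distr lborel (borel \<Otimes>\<^sub>M sphere_surface) (\<lambda>y::real^'m. (norm y, sgn y))) (A \<times> B)"
    by (simp add: emeasure_distr emeasure_polar_rectangle)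
qed simp

lemma nn_integral_polar:
  fixes k :: "real^'m \<Rightarrow> ennreal"
  assumes [measurable]: "k \<in> borel_measurable borel"
  shows "(\<integral>\<^sup>+y. k y \<partial>lborel)
       = (\<integral>\<^sup>+r. radial_density CARD('m) r * (\<integral>\<^sup>+v. k (r *\<^sub>R v) \<partial>sphere_surface) \<partial>lborel)"
proof -
  interpret sphere: finite_measure "sphere_surface :: (real^'m) measure"
    by (rule finite_measure_sphere_surface)
  have "(\<integral>\<^sup>+y. k y \<partial>lborel) = (\<integral>\<^sup>+y. k (norm y *\<^sub>R sgn y) \<partial>lborel)"
    by (simp add: scaleR_norm_sgn)
  also have "\<dots> = (\<integral>\<^sup>+z. k (fst z *\<^sub>R snd z) \<partial>distr lborel (borel \<Otimes>\<^sub>M sphere_surface) (\<lambda>y. (norm y, sgn y)))"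
    by (subst nn_integral_distr) simp_all
  also have "\<dots> = (\<integral>\<^sup>+r. (\<integral>\<^sup>+v. k (r *\<^sub>R v) \<partial>sphere_surface) \<partial>density lborel (radial_density CARD('m)))"
    unfolding polar_coordinates by (subst sphere.nn_integral_fst[symmetric]) simp_all
  also have "\<dots> = (\<integral>\<^sup>+r. radial_density CARD('m) r * (\<integral>\<^sup>+v. k (r *\<^sub>R v) \<partial>sphere_surface) \<partial>lborel)"
    by (subst nn_integral_density) simp_all
  finally show ?thesis .
qed

section \<open>Densities of \<open>R *\<^sub>R V\<close> and of the elliptical vector\<close>

lemma (in prob_space) pair_distr_eq_joint_distr:
  assumes X: "random_variable S X" and Y: "random_variable T Y"
    and prob_Int: "\<And>A B. A \<in> sets S \<Longrightarrow> B \<in> sets T \<Longrightarrow>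
      prob ({\<omega>\<in>space M. X \<omega> \<in> A} \<inter> {\<omega>\<in>space M. Y \<omega> \<in> B})
        = prob {\<omega>\<in>space M. X \<omega> \<in> A} * prob {\<omega>\<in>space M. Y \<omega> \<in> B}"
  shows "distr M S X \<Otimes>\<^sub>M distr M T Y = distr M (S \<Otimes>\<^sub>M T) (\<lambda>\<omega>. (X \<omega>, Y \<omega>))"
proof (rule pair_measure_eqI)
  show "sigma_finite_measure (distr M S X)" "sigma_finite_measure (distr M T Y)"
    using X Y by (auto intro!: prob_space_imp_sigma_finite prob_space_distr)
  have "sets (distr M S X \<Otimes>\<^sub>M distr M T Y) = sets (S \<Otimes>\<^sub>M T)"
    by (rule sets_pair_measure_cong) simp_all
  then show "sets (distr M S X \<Otimes>\<^sub>M distr M T Y) = sets (distr M (S \<Otimes>\<^sub>M T) (\<lambda>\<omega>. (X \<omega>, Y \<omega>)))"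
    by simp
  have XY: "(\<lambda>\<omega>. (X \<omega>, Y \<omega>)) \<in> M \<rightarrow>\<^sub>M S \<Otimes>\<^sub>M T"
    using X Y by (rule measurable_Pair)
  fix A B
  assume "A \<in> sets (distr M S X)" "B \<in> sets (distr M T Y)"
  then have A: "A \<in> sets S" and B: "B \<in> sets T"
    by simp_all
  have "emeasure (distr M S X) A = prob {\<omega>\<in>space M. X \<omega> \<in> A}"
    using A by (simp add: emeasure_distr[OF X] emeasure_eq_measure vimage_def Int_def conj_commute)
  moreover have "emeasure (distr M T Y) B = prob {\<omega>\<in>space M. Y \<omega> \<in> B}"
    using B by (simp add: emeasure_distr[OF Y] emeasure_eq_measure vimage_def Int_def conj_commute)
  moreover have "emeasure (distr M (S \<Otimes>\<^sub>M T) (\<lambda>\<omega>. (X \<omega>, Y \<omega>))) (A \<times> B)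
      = prob ({\<omega>\<in>space M. X \<omega> \<in> A} \<inter> {\<omega>\<in>space M. Y \<omega> \<in> B})"
  proof -
    have "(\<lambda>\<omega>. (X \<omega>, Y \<omega>)) -` (A \<times> B) \<inter> space M = {\<omega>\<in>space M. X \<omega> \<in> A} \<inter> {\<omega>\<in>space M. Y \<omega> \<in> B}"
      by auto
    moreover have "A \<times> B \<in> sets (S \<Otimes>\<^sub>M T)"
      using A B by (rule pair_measureI)
    ultimately show ?thesis
      by (simp only: emeasure_distr[OF XY] emeasure_eq_measure)
  qed
  ultimately show "emeasure (distr M S X) A * emeasure (distr M T Y) B
      = emeasure (distr M (S \<Otimes>\<^sub>M T) (\<lambda>\<omega>. (X \<omega>, Y \<omega>))) (A \<times> B)"
    using prob_Int[OF A B] by (simp add: ennreal_mult[symmetric])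
qed

lemma (in prob_space) emeasure_distr_scaleR:
  fixes R :: "'a \<Rightarrow> real" and V :: "'a \<Rightarrow> real^'m"
  assumes RV: "distributed M (lborel \<Otimes>\<^sub>M sphere_surface) (\<lambda>\<omega>. (R \<omega>, V \<omega>)) p"
    and [measurable]: "B \<in> sets borel"
  shows "emeasure (distr M lborel (\<lambda>\<omega>. R \<omega> *\<^sub>R V \<omega>)) B
       = (\<integral>\<^sup>+r. (\<integral>\<^sup>+v. p (r, v) * indicator B (r *\<^sub>R v) \<partial>sphere_surface) \<partial>lborel)"
proof -
  interpret sphere: finite_measure "sphere_surface :: (real^'m) measure"
    by (rule finite_measure_sphere_surface)
  have [measurable]: "p \<in> borel_measurable (lborel \<Otimes>\<^sub>M sphere_surface)"
    and [measurable]: "(\<lambda>\<omega>. (R \<omega>, V \<omega>)) \<in> M \<rightarrow>\<^sub>M lborel \<Otimes>\<^sub>M sphere_surface"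
    using RV by (simp_all add: distributed_def)
  have "emeasure (distr M lborel (\<lambda>\<omega>. R \<omega> *\<^sub>R V \<omega>)) B
      = emeasure (distr (density (lborel \<Otimes>\<^sub>M sphere_surface) p) lborel (\<lambda>(r, v). r *\<^sub>R v)) B"
    unfolding distributed_distr_eq_density[OF RV, symmetric] by (subst distr_distr) (simp_all add: o_def)
  also have "\<dots> = (\<integral>\<^sup>+z. p z * indicator B (fst z *\<^sub>R snd z) \<partial>(lborel \<Otimes>\<^sub>M sphere_surface))"
  proof -
    have "(\<lambda>(r, v). r *\<^sub>R v) -` B \<inter> space (lborel \<Otimes>\<^sub>M sphere_surface) \<in> sets (lborel \<Otimes>\<^sub>M sphere_surface)"
      by measurable
    then show ?thesis
      by (subst emeasure_distr) (auto simp: emeasure_density intro!: nn_integral_cong split: split_indicator)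
  qed
  also have "\<dots> = (\<integral>\<^sup>+r. (\<integral>\<^sup>+v. p (r, v) * indicator B (r *\<^sub>R v) \<partial>sphere_surface) \<partial>lborel)"
    by (subst sphere.nn_integral_fst[symmetric]) simp_all
  finally show ?thesis .
qed

lemma (in prob_space) distributed_polar_scaleR:
  fixes R :: "'a \<Rightarrow> real" and V :: "'a \<Rightarrow> real^'m" and p :: "real \<times> (real^'m) \<Rightarrow> ennreal"
  assumes RV: "distributed M (lborel \<Otimes>\<^sub>M sphere_surface) (\<lambda>\<omega>. (R \<omega>, V \<omega>)) p"
    and nonpos: "\<And>r v. r \<le> 0 \<Longrightarrow> p (r, v) = 0"
  shows "distributed M lborel (\<lambda>\<omega>. R \<omega> *\<^sub>R V \<omega>)
           (\<lambda>y. ennreal (norm y powr (1 - real CARD('m))) * p (norm y, sgn y))"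
proof -
  define g where "g y = ennreal (norm y powr (1 - real CARD('m))) * p (norm y, sgn y)" for y :: "real^'m"
  have [measurable]: "p \<in> borel_measurable (lborel \<Otimes>\<^sub>M sphere_surface)"
    using RV by (simp add: distributed_def)
  have [measurable]: "g \<in> borel_measurable borel"
    unfolding g_def by measurable
  have "(\<lambda>z. fst z *\<^sub>R snd z) \<in> lborel \<Otimes>\<^sub>M sphere_surface \<rightarrow>\<^sub>M (borel :: (real^'m) measure)"
    by measurable
  from measurable_comp[OF distributed_measurable[OF RV] this]
  have RV_meas: "(\<lambda>\<omega>. R \<omega> *\<^sub>R V \<omega>) \<in> M \<rightarrow>\<^sub>M borel"
    by (simp add: o_def)
  have polar_g: "radial_density CARD('m) r * g (r *\<^sub>R v) = p (r, v)" if "v \<in> sphere 0 1" for r v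
  proof (cases "r > 0")
    case True
    with that have "sgn (r *\<^sub>R v) = v" and "norm (r *\<^sub>R v) = r"
      by (simp_all add: sgn_scaleR sgn_div_norm)
    with True show ?thesis
      by (simp add: g_def mult.assoc[symmetric] radial_density_mult_powr Suc_le_eq)
  qed (simp add: radial_density_def nonpos)
  have "distr M lborel (\<lambda>\<omega>. R \<omega> *\<^sub>R V \<omega>) = density lborel g"
  proof (rule measure_eqI)
    fix B :: "(real^'m) set"
    assume "B \<in> sets (distr M lborel (\<lambda>\<omega>. R \<omega> *\<^sub>R V \<omega>))"
    then have [measurable]: "B \<in> sets borel"
      by simp
    have "(\<integral>\<^sup>+v. p (r, v) * indicator B (r *\<^sub>R v) \<partial>sphere_surface)
        = radial_density CARD('m) r * (\<integral>\<^sup>+v. g (r *\<^sub>R v) * indicator B (r *\<^sub>R v) \<partial>sphere_surface)" for r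
    proof -
      have "AE v in sphere_surface.
          p (r, v) * indicator B (r *\<^sub>R v) = radial_density CARD('m) r * (g (r *\<^sub>R v) * indicator B (r *\<^sub>R v))"
        using AE_sphere_surface by eventually_elim (simp add: polar_g mult.assoc[symmetric])
      then show ?thesis
        by (subst nn_integral_cmult[symmetric]) (auto intro!: nn_integral_cong_AE)
    qed
    then show "emeasure (distr M lborel (\<lambda>\<omega>. R \<omega> *\<^sub>R V \<omega>)) B = emeasure (density lborel g) B"
      by (simp add: emeasure_distr_scaleR[OF RV] emeasure_density nn_integral_polar)
  qed simp
  with RV_meas show ?thesis
    unfolding distributed_def g_def by simp
qed

lemma power2_powr_minus_half:
  fixes a :: real
  assumes "a > 0"
  shows "(a\<^sup>2) powr (- (real n - 1) / 2) = a powr (1 - real n)"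
proof -
  have "a\<^sup>2 = a powr 2"
    using assms by (simp add: powr_numeral)
  then have "(a\<^sup>2) powr (- (real n - 1) / 2) = a powr (2 * (- (real n - 1) / 2))"
    by (simp only: powr_powr)
  also have "2 * (- (real n - 1) / 2) = 1 - real n"
    by simp
  finally show ?thesis .
qed

lemma elliptical_density_eq:
  fixes S :: "real^'n^'n" and h :: "real^'n \<Rightarrow> real" and q :: "real \<Rightarrow> real"
  assumes "sym_pos_def S" and "x \<noteq> \<mu>" and "\<And>r. q r \<ge> 0"
  defines "y \<equiv> matrix_inv S *v (x - \<mu>)" and "t \<equiv> (x - \<mu>) \<bullet> (matrix_inv (S ** S) *v (x - \<mu>))"
  shows "ennreal (norm y powr (1 - real CARD('n)))
           * (ennreal (indicator {0<..} (norm y) * q (norm y)) * ennreal (h (sgn y))) / ennreal \<bar>det S\<bar>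
       = ennreal (det (S ** S) powr (-1/2) * h ((1 / sqrt t) *\<^sub>R y)
           * (t powr (- (real CARD('n) - 1) / 2) * q (sqrt t)))"
proof -
  have S: "invertible S"
    using assms(1) by (rule sym_pos_def_invertible)
  have "S *v y = x - \<mu>"
    unfolding y_def using S by (rule matrix_inv_matrix_vector_mult(2))
  with \<open>x \<noteq> \<mu>\<close> have "y \<noteq> 0"
    by auto
  have "transpose S = S"
    using assms(1) by (simp add: sym_pos_def_def)
  then have t: "t = (norm y)\<^sup>2"
    unfolding t_def y_def by (rule inner_matrix_inv_square[OF _ S])
  then have sqrt_t: "sqrt t = norm y"
    by simp
  have t_powr: "t powr (- (real CARD('n) - 1) / 2) = norm y powr (1 - real CARD('n))"
    unfolding t using \<open>y \<noteq> 0\<close> by (intro power2_powr_minus_half) simp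
  have sgn_y: "(1 / norm y) *\<^sub>R y = sgn y"
    by (simp add: sgn_div_norm divide_inverse_commute)
  have "det (S ** S) powr (-1/2) * h ((1 / sqrt t) *\<^sub>R y) * (t powr (- (real CARD('n) - 1) / 2) * q (sqrt t))
      = norm y powr (1 - real CARD('n)) * (q (norm y) * (inverse \<bar>det S\<bar> * h (sgn y)))"
    unfolding sqrt_t sgn_y t_powr det_square_powr_minus_half[OF S] by (simp add: divide_inverse ac_simps)
  also have "ennreal \<dots> = ennreal (norm y powr (1 - real CARD('n))) * (ennreal (q (norm y)) * ennreal (h (sgn y)))
      * inverse (ennreal \<bar>det S\<bar>)"
    using S
    by (simp only: ennreal_mult'[OF powr_ge_zero] ennreal_mult'[OF assms(3)]
        ennreal_mult'[OF inverse_nonnegative_iff_nonnegative[THEN iffD2, OF abs_ge_zero]])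
      (simp add: inverse_ennreal invertible_det_nz ac_simps)
  finally show ?thesis
    using \<open>y \<noteq> 0\<close> by (simp add: divide_ennreal_def)
qed

theorem mainTheorem1:
  fixes M :: "'a measure"
    and \<mu> \<mu>v :: "real ^ 'm"
    and \<Sigma> S :: "real ^ 'm ^ 'm"
    and \<tau> :: real
    and R :: "'a \<Rightarrow> real" and V :: "'a \<Rightarrow> real ^ 'm"
    and pR :: "real \<Rightarrow> real"
  assumes "prob_space M"
    and "CARD('m) \<ge> 2"
    and "sym_pos_def \<Sigma>"
    and "sym_pos_def S" and "S ** S = \<Sigma>"
    and "norm \<mu>v = 1" and "\<tau> > 0"
    and "\<forall>r. pR r \<ge> 0"
    and "\<forall>\<omega>\<in>space M. R \<omega> \<ge> 0"
    and "distributed M lborel R (\<lambda>r. ennreal (indicator {0<..} r * pR r))"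
    and "distributed M sphere_surface V (\<lambda>v. ennreal (vMF_density \<mu>v \<tau> v))"
    and "\<forall>A\<in>sets (borel :: real measure). \<forall>B\<in>sets (borel :: (real ^ 'm) measure).
           measure M ({\<omega>\<in>space M. R \<omega> \<in> A} \<inter> {\<omega>\<in>space M. V \<omega> \<in> B}) =
           measure M {\<omega>\<in>space M. R \<omega> \<in> A} * measure M {\<omega>\<in>space M. V \<omega> \<in> B}"
  shows "\<exists>f. distributed M lborel (\<lambda>\<omega>. \<mu> + R \<omega> *\<^sub>R (S *v V \<omega>)) f \<and>
     (\<forall>x. x \<noteq> \<mu> \<longrightarrow>
        (let t = (x - \<mu>) \<bullet> (matrix_inv \<Sigma> *v (x - \<mu>)) in
         f x = ennreal (det \<Sigma> powr (-1/2)
                 * vMF_density \<mu>v \<tau> ((1 / sqrt t) *\<^sub>R (matrix_inv S *v (x - \<mu>)))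
                 * (t powr (- (real CARD('m) - 1) / 2) * pR (sqrt t)))))"
proof -
  interpret prob_space M by fact
  have S: "invertible S"
    using \<open>sym_pos_def S\<close> by (rule sym_pos_def_invertible)
  define g where "g y = ennreal (norm y powr (1 - real CARD('m)))
      * (ennreal (indicator {0<..} (norm y) * pR (norm y)) * ennreal (vMF_density \<mu>v \<tau> (sgn y)))"
    for y :: "real^'m"
  have "distr M lborel R \<Otimes>\<^sub>M distr M sphere_surface V = distr M (lborel \<Otimes>\<^sub>M sphere_surface) (\<lambda>\<omega>. (R \<omega>, V \<omega>))"
    using assms(12)
    by (intro pair_distr_eq_joint_distr distributed_measurable[OF assms(10)] distributed_measurable[OF assms(11)])
      simp_all
  with assms(10,11) have "distributed M (lborel \<Otimes>\<^sub>M sphere_surface) (\<lambda>\<omega>. (R \<omega>, V \<omega>))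
      (\<lambda>(r, v). ennreal (indicator {0<..} r * pR r) * ennreal (vMF_density \<mu>v \<tau> v))"
    by (intro distributed_joint_indep' lborel.sigma_finite_measure_axioms
        finite_measure.sigma_finite_measure finite_measure_sphere_surface)
  from distributed_polar_scaleR[OF this] have "distributed M lborel (\<lambda>\<omega>. R \<omega> *\<^sub>R V \<omega>) g"
    by (simp add: g_def[abs_def])
  from distributed_matrix_affine[OF this S, of \<mu>]
  have "distributed M lborel (\<lambda>\<omega>. \<mu> + R \<omega> *\<^sub>R (S *v V \<omega>))
      (\<lambda>x. g (matrix_inv S *v (x - \<mu>)) / ennreal \<bar>det S\<bar>)"
    by (simp add: matrix_vector_mult_scaleR)
  with elliptical_density_eq[OF \<open>sym_pos_def S\<close>] assms(5,8) show ?thesis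
    unfolding g_def Let_def by blast
qed

end
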